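(* Let $P$ be a poset. (1) $\mathcal{M}(P)$ is a left gcd-monoid if and only if for every $a\in P$ the subset $\{x\in P: x\ge a\}$ is a meet-semilattice (under the induced order). (2) $\mathcal{M}(P)$ is a right gcd-monoid if and only if for every $a\in P$ the subset $\{x\in P:x\le a\}$ is a join-semilattice.
   Context: For a poset $P$, the interval monoid $\mathcal{M}(P)$ is the monoid presented by generators $[x,y]$ for $x\le y$ in $P$ and relations $[x,x]=1$ ($x\in P$) and $[x,z]=[x,y][y,z]$ whenever $x\le y\le z$. In a monoid $M$, $a\leqslant b$ iff $b=ax$ for some $x$, and $a\mathbin{\widetilde\leqslant}b$ iff $b=xa$ for some $x$. $M$ is a left gcd-monoid if it is conical ($xy=1\Rightarrow x=1$), left cancellative, and any two elements have a greatest lower bound w.r.t. $\leqslant$; a right gcd-monoid if it is conical, right cancellative, and any two elements have a greatest lower bound w.r.t. $\mathbin{\widetilde\leqslant}$. *)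

theory Defs
  imports Main
begin

text \<open>A monoid presented by a generating set G and a set R of relations
(pairs of words over G) is the free monoid on G (words = lists over G,
product = append, unit = empty list) modulo the congruence generated by R.
We represent its elements by words over G and equality in the monoid by
the congruence pcong R.\<close>

definition words :: "'g set \<Rightarrow> 'g list set" where
  "words G = {w. set w \<subseteq> G}"

inductive pcong :: "('g list \<times> 'g list) set \<Rightarrow> 'g list \<Rightarrow> 'g list \<Rightarrow> bool"
  for R where
  pc_refl: "pcong R u u"
| pc_sym: "pcong R u v \<Longrightarrow> pcong R v u"
| pc_trans: "pcong R u v \<Longrightarrow> pcong R v w \<Longrightarrow> pcong R u w"
| pc_rel: "(u, v) \<in> R \<Longrightarrow> pcong R (a @ u @ b) (a @ v @ b)"

definition pm_le :: "'g set \<Rightarrow> ('g list \<times> 'g list) set \<Rightarrow> 'g list \<Rightarrow> 'g list \<Rightarrow> bool" where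
  "pm_le G R a b \<longleftrightarrow> (\<exists>x\<in>words G. pcong R b (a @ x))"

definition pm_rle :: "'g set \<Rightarrow> ('g list \<times> 'g list) set \<Rightarrow> 'g list \<Rightarrow> 'g list \<Rightarrow> bool" where
  "pm_rle G R a b \<longleftrightarrow> (\<exists>x\<in>words G. pcong R b (x @ a))"

definition pm_conical :: "'g set \<Rightarrow> ('g list \<times> 'g list) set \<Rightarrow> bool" where
  "pm_conical G R \<longleftrightarrow>
     (\<forall>x\<in>words G. \<forall>y\<in>words G. pcong R (x @ y) [] \<longrightarrow> pcong R x [])"

definition pm_left_cancellative :: "'g set \<Rightarrow> ('g list \<times> 'g list) set \<Rightarrow> bool" where
  "pm_left_cancellative G R \<longleftrightarrow>
     (\<forall>a\<in>words G. \<forall>x\<in>words G. \<forall>y\<in>words G. pcong R (a @ x) (a @ y) \<longrightarrow> pcong R x y)"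

definition pm_right_cancellative :: "'g set \<Rightarrow> ('g list \<times> 'g list) set \<Rightarrow> bool" where
  "pm_right_cancellative G R \<longleftrightarrow>
     (\<forall>a\<in>words G. \<forall>x\<in>words G. \<forall>y\<in>words G. pcong R (x @ a) (y @ a) \<longrightarrow> pcong R x y)"

definition pm_left_gcd_monoid :: "'g set \<Rightarrow> ('g list \<times> 'g list) set \<Rightarrow> bool" where
  "pm_left_gcd_monoid G R \<longleftrightarrow> pm_conical G R \<and> pm_left_cancellative G R \<and>
     (\<forall>a\<in>words G. \<forall>b\<in>words G. \<exists>d\<in>words G. pm_le G R d a \<and> pm_le G R d b \<and>
        (\<forall>c\<in>words G. pm_le G R c a \<and> pm_le G R c b \<longrightarrow> pm_le G R c d))"

definition pm_right_gcd_monoid :: "'g set \<Rightarrow> ('g list \<times> 'g list) set \<Rightarrow> bool" where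
  "pm_right_gcd_monoid G R \<longleftrightarrow> pm_conical G R \<and> pm_right_cancellative G R \<and>
     (\<forall>a\<in>words G. \<forall>b\<in>words G. \<exists>d\<in>words G. pm_rle G R d a \<and> pm_rle G R d b \<and>
        (\<forall>c\<in>words G. pm_rle G R c a \<and> pm_rle G R c b \<longrightarrow> pm_rle G R c d))"

text \<open>The poset is a subset P of a type with a partial order (induced order).
Generator [x,y] is the pair (x,y).\<close>

definition iv_gens :: "'a::order set \<Rightarrow> ('a \<times> 'a) set" where
  "iv_gens P = {(x, y). x \<in> P \<and> y \<in> P \<and> x \<le> y}"

definition iv_rels :: "'a::order set \<Rightarrow> (('a \<times> 'a) list \<times> ('a \<times> 'a) list) set" where
  "iv_rels P = {([(x, x)], []) | x. x \<in> P} \<union>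
     {([(x, z)], [(x, y), (y, z)]) | x y z. x \<in> P \<and> y \<in> P \<and> z \<in> P \<and> x \<le> y \<and> y \<le> z}"

definition meet_semilattice_on :: "'a::order set \<Rightarrow> bool" where
  "meet_semilattice_on S \<longleftrightarrow> (\<forall>x\<in>S. \<forall>y\<in>S. \<exists>m\<in>S. m \<le> x \<and> m \<le> y \<and>
     (\<forall>z\<in>S. z \<le> x \<and> z \<le> y \<longrightarrow> z \<le> m))"

definition join_semilattice_on :: "'a::order set \<Rightarrow> bool" where
  "join_semilattice_on S \<longleftrightarrow> (\<forall>x\<in>S. \<forall>y\<in>S. \<exists>j\<in>S. x \<le> j \<and> y \<le> j \<and>
     (\<forall>z\<in>S. x \<le> z \<and> y \<le> z \<longrightarrow> j \<le> z))"

end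

theory Submission
  imports Defs
begin

text \<open>Every element of the interval monoid has a unique normal form: a word
[x1,y1]\<dots>[xn,yn] of nontrivial intervals with yi \<noteq> x(i+1), obtained by
deleting trivial generators and gluing adjacent intervals. The left divisors of a normal
word are its prefixes, the last interval of which may be shortened from [x,y] to [x,r]
with x < r \<le> y. Hence two normal words have a greatest common left divisor as soon as
meets exist in the up-sets of P: it is their longest common prefix followed by
[x, y \<sqinter> y'], the meet being taken in the up-set of x. Conversely, the gcd of [a,x]
and [a,y] is [a,m] where m is the meet of x and y above a. Reversing words and
swapping the ends of intervals maps the interval monoid anti-isomorphically onto the
interval monoid of the dual poset, which turns the right-hand statement into the
left-hand one.\<close>

text \<open>The presentation of the interval monoid is taken with respect to an arbitrary partial
order, so that it can also be applied to the dual order.\<close>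

definition interval_gens :: "('a \<Rightarrow> 'a \<Rightarrow> bool) \<Rightarrow> 'a set \<Rightarrow> ('a \<times> 'a) set" where
  "interval_gens le P = {(x, y). x \<in> P \<and> y \<in> P \<and> le x y}"

definition interval_rels :: "('a \<Rightarrow> 'a \<Rightarrow> bool) \<Rightarrow> 'a set \<Rightarrow> (('a \<times> 'a) list \<times> ('a \<times> 'a) list) set" where
  "interval_rels le P = {([(x, x)], []) | x. x \<in> P} \<union>
     {([(x, z)], [(x, y), (y, z)]) | x y z. x \<in> P \<and> y \<in> P \<and> z \<in> P \<and> le x y \<and> le y z}"

definition meet_semilattice_wrt :: "('a \<Rightarrow> 'a \<Rightarrow> bool) \<Rightarrow> 'a set \<Rightarrow> bool" where
  "meet_semilattice_wrt le S \<longleftrightarrow> (\<forall>x\<in>S. \<forall>y\<in>S. \<exists>m\<in>S. le m x \<and> le m y \<and>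
     (\<forall>z\<in>S. le z x \<and> le z y \<longrightarrow> le z m))"

lemma pcong_append_context: "pcong R u v \<Longrightarrow> pcong R (a @ u @ b) (a @ v @ b)"
proof (induction rule: pcong.induct)
  case (pc_rel u v a' b')
  then show ?case using pcong.pc_rel[OF pc_rel, of "a @ a'" "b' @ b"] by simp
qed (auto intro: pcong.intros)

section \<open>Normal forms\<close>

locale interval_monoid =
  fixes le :: "'a \<Rightarrow> 'a \<Rightarrow> bool" (infix "\<preceq>" 50) and P :: "'a set"
  assumes prec_refl: "x \<preceq> x"
    and prec_trans: "x \<preceq> y \<Longrightarrow> y \<preceq> z \<Longrightarrow> x \<preceq> z"
    and prec_antisym: "x \<preceq> y \<Longrightarrow> y \<preceq> x \<Longrightarrow> x = y"
begin

abbreviation "G \<equiv> interval_gens le P"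
abbreviation "R \<equiv> interval_rels le P"

lemma prec_strict_trans: "x \<preceq> y \<Longrightarrow> y \<preceq> z \<Longrightarrow> x \<noteq> y \<Longrightarrow> x \<noteq> z"
  using prec_antisym prec_trans by blast

lemma in_G_iff [simp]: "(x, y) \<in> G \<longleftrightarrow> x \<in> P \<and> y \<in> P \<and> x \<preceq> y"
  by (simp add: interval_gens_def)

fun ncons :: "'a \<times> 'a \<Rightarrow> ('a \<times> 'a) list \<Rightarrow> ('a \<times> 'a) list" where
  "ncons (x, y) [] = (if (x, y) \<in> G \<and> x = y then [] else [(x, y)])"
| "ncons (x, y) ((y', z) # w) =
     (if (x, y) \<in> G \<and> x = y then (y', z) # w
      else if (x, y) \<in> G \<and> (y', z) \<in> G \<and> y = y' then (x, z) # w
      else (x, y) # (y', z) # w)"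

definition nf :: "('a \<times> 'a) list \<Rightarrow> ('a \<times> 'a) list" where
  "nf u = foldr ncons u []"

lemma nf_simps [simp]: "nf [] = []" "nf (l # u) = ncons l (nf u)"
  by (simp_all add: nf_def)

lemma nf_append: "nf (u @ v) = foldr ncons u (nf v)"
  by (simp add: nf_def)

lemma ncons_unit: "x \<in> P \<Longrightarrow> ncons (x, x) w = w"
  by (cases w) (auto simp: prec_refl)

lemma foldr_ncons_respects_rels: "(u, v) \<in> R \<Longrightarrow> foldr ncons u w = foldr ncons v w"
proof (unfold interval_rels_def, elim UnE CollectE exE conjE)
  fix x y z assume uv: "(u, v) = ([(x, z)], [(x, y), (y, z)])"
    and xyz: "x \<in> P" "y \<in> P" "z \<in> P" "x \<preceq> y" "y \<preceq> z"
  show ?thesis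
  proof (cases "x = y \<or> y = z")
    case True
    then show ?thesis using uv xyz by (auto simp: ncons_unit)
  next
    case False
    then have "x \<noteq> z" using xyz prec_antisym prec_trans by metis
    then show ?thesis using uv xyz False
      by (cases w rule: list.exhaust[case_product prod.exhaust]) (auto intro: prec_trans)
  qed
qed (simp add: ncons_unit)

lemma nf_pcong: "pcong R u v \<Longrightarrow> nf u = nf v"
  by (induction rule: pcong.induct) (simp_all add: nf_append foldr_ncons_respects_rels)

lemma pcong_rel: "(u, v) \<in> R \<Longrightarrow> pcong R (u @ w) (v @ w)"
  using pcong.pc_rel[of u v R "[]" w] by simp

lemma pcong_Cons_ncons: "pcong R (l # w) (ncons l w)"
proof (cases "l \<in> G \<and> fst l = snd l")
  case True
  then obtain x where "l = (x, x)" "x \<in> P" by (cases l) auto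
  then show ?thesis
    using pcong_rel[of "[l]" "[]"] by (simp add: ncons_unit interval_rels_def)
next
  case False
  obtain x y where l: "l = (x, y)" by (cases l)
  show ?thesis
  proof (cases w)
    case (Cons m w')
    obtain y' z where m: "m = (y', z)" by (cases m)
    show ?thesis
    proof (cases "l \<in> G \<and> m \<in> G \<and> y = y'")
      case True
      then have "([(x, z)], [(x, y), (y, z)]) \<in> R" using l m by (auto simp: interval_rels_def)
      from pcong_rel[OF this, of w'] have "pcong R ((x, z) # w') (l # w)"
        using True l m Cons by simp
      then show ?thesis using pcong.pc_sym False True l m Cons by auto
    qed (use False l m Cons in \<open>auto intro: pcong.pc_refl\<close>)
  qed (use False l in \<open>auto intro: pcong.pc_refl\<close>)
qed

lemma pcong_nf: "pcong R u (nf u)"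
proof (induction u)
  case (Cons l u)
  have "pcong R ([l] @ u @ []) ([l] @ nf u @ [])"
    by (rule pcong_append_context[OF Cons.IH])
  then show ?case using pcong_Cons_ncons pcong.pc_trans by fastforce
qed (simp add: pcong.pc_refl)

lemma pcong_iff_nf: "pcong R u v \<longleftrightarrow> nf u = nf v"
  by (metis pcong.pc_sym pcong.pc_trans nf_pcong pcong_nf)

fun normal :: "('a \<times> 'a) list \<Rightarrow> bool" where
  "normal [] = True"
| "normal [(x, y)] \<longleftrightarrow> (x, y) \<in> G \<and> x \<noteq> y"
| "normal ((x, y) # (y', z) # w) \<longleftrightarrow> (x, y) \<in> G \<and> x \<noteq> y \<and> y \<noteq> y' \<and> normal ((y', z) # w)"

lemma normal_ncons: "l \<in> G \<Longrightarrow> normal w \<Longrightarrow> normal (ncons l w)"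
proof -
  assume "l \<in> G" "normal w"
  moreover obtain x y where "l = (x, y)" by (cases l)
  ultimately show ?thesis
    by (cases w rule: normal.cases) (auto intro: prec_trans dest: prec_strict_trans)
qed

lemma ncons_normal: "normal (l # w) \<Longrightarrow> ncons l w = l # w"
  by (cases "l # w" rule: normal.cases) auto

lemma normal_foldr_ncons: "u \<in> words G \<Longrightarrow> normal w \<Longrightarrow> normal (foldr ncons u w)"
  by (induction u) (auto simp: words_def normal_ncons)

lemma normal_nf: "u \<in> words G \<Longrightarrow> normal (nf u)"
  unfolding nf_def by (simp add: normal_foldr_ncons)

lemma normal_Cons: "normal (l # w) \<Longrightarrow> normal w"
  by (cases "l # w" rule: normal.cases) auto

lemma normal_hd: "normal (l # w) \<Longrightarrow> l \<in> G \<and> fst l \<noteq> snd l"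
  by (cases "l # w" rule: normal.cases) auto

lemma nf_normal: "normal w \<Longrightarrow> nf w = w"
proof (induction w)
  case (Cons l w)
  then show ?case using normal_Cons[OF Cons.prems] by (simp add: ncons_normal)
qed simp

lemma normal_words: "normal w \<Longrightarrow> w \<in> words G"
  by (induction w rule: normal.induct) (auto simp: words_def)

lemma length_foldr_ncons: "length w \<le> length (foldr ncons u w)"
proof (induction u)
  case (Cons l u)
  have "length v \<le> length (ncons l v)" for v
    by (cases l; cases v) auto
  then show ?case using Cons.IH le_trans by fastforce
qed simp

theorem conical: "pm_conical G R"
  unfolding pm_conical_def pcong_iff_nf
proof (intro ballI impI)
  fix x y assume "nf (x @ y) = nf []"
  then have "foldr ncons x (nf y) = []" by (simp add: nf_append)
  moreover from this have "nf y = []" using length_foldr_ncons[of "nf y" x] by simp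
  ultimately show "nf x = nf []" by (simp add: nf_def)
qed

lemma ncons_inj:
  assumes "l \<in> G" "normal v" "normal w" "ncons l v = ncons l w"
  shows "v = w"
proof -
  obtain x y where l: "l = (x, y)" by (cases l)
  show ?thesis
  proof (cases "x = y")
    case True
    then show ?thesis using assms l by (simp add: ncons_unit)
  next
    case False
    then show ?thesis using assms l
      by (cases v rule: list.exhaust[case_product prod.exhaust];
          cases w rule: list.exhaust[case_product prod.exhaust]) (auto split: if_splits)
  qed
qed

lemma foldr_ncons_inj:
  "u \<in> words G \<Longrightarrow> normal v \<Longrightarrow> normal w \<Longrightarrow> foldr ncons u v = foldr ncons u w \<Longrightarrow> v = w"
proof (induction u)
  case (Cons l u)
  then show ?case
    using ncons_inj[of l "foldr ncons u v" "foldr ncons u w"] normal_foldr_ncons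
    by (auto simp: words_def)
qed simp

theorem left_cancellative: "pm_left_cancellative G R"
  unfolding pm_left_cancellative_def pcong_iff_nf
  using foldr_ncons_inj normal_nf by (auto simp: nf_append)

section \<open>Left divisibility\<close>

fun ldvd :: "('a \<times> 'a) list \<Rightarrow> ('a \<times> 'a) list \<Rightarrow> bool" where
  "ldvd d [] \<longleftrightarrow> d = []"
| "ldvd d ((x, y) # w) \<longleftrightarrow> d = [] \<or> (\<exists>r\<in>P. d = [(x, r)] \<and> x \<preceq> r \<and> r \<preceq> y \<and> r \<noteq> x)
     \<or> (\<exists>d'. d = (x, y) # d' \<and> ldvd d' w)"

lemma ldvd_Nil [simp]: "ldvd [] w"
  by (cases w) auto

lemma ldvd_hd: "ldvd d w \<Longrightarrow> d \<noteq> [] \<Longrightarrow> w \<noteq> [] \<and> fst (hd d) = fst (hd w)"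
  by (cases w) auto

lemma ldvd_nf_append: "normal d \<Longrightarrow> ldvd d (nf (d @ u))"
proof (induction d rule: normal.induct)
  case (2 x y)
  then show ?case
    by (cases "nf u" rule: list.exhaust[case_product prod.exhaust]) force+
next
  case (3 x y y' z w)
  let ?v = "nf ((y', z) # w @ u)"
  have ih: "ldvd ((y', z) # w) ?v" using 3 by simp
  then obtain z' r where "?v = (y', z') # r"
    using ldvd_hd[OF ih] by (cases ?v) auto
  then have "nf ((x, y) # (y', z) # w @ u) = (x, y) # ?v" using "3.prems" by simp
  then show ?case using ih by simp
qed simp_all

lemma ldvd_cofactor: "normal w \<Longrightarrow> ldvd d w \<Longrightarrow> \<exists>u\<in>words G. nf (d @ u) = w"
proof (induction w arbitrary: d)
  case Nil
  then show ?case by (auto simp: words_def intro: exI[of _ "[]"])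
next
  case (Cons l w)
  obtain x y where l: "l = (x, y)" by (cases l)
  have w: "normal w" using Cons.prems(1) by (rule normal_Cons)
  from Cons.prems(2) l consider "d = []"
    | r where "r \<in> P" "d = [(x, r)]" "x \<preceq> r" "r \<preceq> y" "r \<noteq> x"
    | d' where "d = (x, y) # d'" "ldvd d' w"
    by auto
  then show ?case
  proof cases
    case 1
    then show ?thesis using Cons.prems(1) nf_normal normal_words by auto
  next
    case (2 r)
    show ?thesis
    proof (cases "r = y")
      case True
      then show ?thesis using 2 Cons.prems(1) l w nf_normal normal_words
        by (metis append_Cons append_Nil)
    next
      case False
      have "normal ((r, y) # w)"
        using Cons.prems(1) l 2 False by (cases w rule: normal.cases) auto
      moreover have "nf (d @ (r, y) # w) = (x, y) # w"
        using 2 nf_normal[OF calculation] normal_hd[OF Cons.prems(1)] l by simp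
      ultimately show ?thesis using normal_words l by blast
    qed
  next
    case (3 d')
    then obtain u where "u \<in> words G" "nf (d' @ u) = w" using Cons.IH w by blast
    then show ?thesis using 3 Cons.prems(1) l ncons_normal by (intro bexI[of _ u]) auto
  qed
qed

lemma nf_append_nf: "nf (nf d @ u) = nf (d @ u)"
  using pcong_append_context[OF pcong_nf[of d], of "[]" u] by (simp add: pcong_iff_nf)

lemma pm_le_iff_ldvd:
  assumes d: "d \<in> words G" and w: "w \<in> words G"
  shows "pm_le G R d w \<longleftrightarrow> ldvd (nf d) (nf w)"
proof
  assume "pm_le G R d w"
  then obtain u where "nf w = nf (d @ u)"
    by (auto simp: pm_le_def pcong_iff_nf)
  then show "ldvd (nf d) (nf w)"
    using ldvd_nf_append[OF normal_nf[OF d], of u] by (simp add: nf_append_nf)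
next
  assume "ldvd (nf d) (nf w)"
  then obtain u where "u \<in> words G" "nf (nf d @ u) = nf w"
    using ldvd_cofactor normal_nf[OF w] by blast
  then show "pm_le G R d w"
    by (auto simp: pm_le_def pcong_iff_nf nf_append_nf intro: sym)
qed

section \<open>Greatest common left divisors\<close>

lemma ldvd_Cons_same [simp]: "ldvd ((x, y) # d) ((x, y) # w) \<longleftrightarrow> ldvd d w"
  by (cases d) auto

lemma ldvd_common_of_diverging:
  assumes "y \<noteq> y'" "ldvd d ((x, y) # v)" "ldvd d ((x, y') # w)"
  shows "d = [] \<or> (\<exists>r\<in>P. d = [(x, r)] \<and> x \<preceq> r \<and> r \<preceq> y \<and> r \<preceq> y' \<and> r \<noteq> x)"
  using assms by (auto simp: prec_refl)

lemma normal_ldvd: "ldvd d w \<Longrightarrow> normal w \<Longrightarrow> normal d"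
proof (induction w arbitrary: d rule: normal.induct)
  case (3 x y y' z w)
  then show ?case by (cases d rule: normal.cases) auto
qed auto

context
  fixes meet :: "'a \<Rightarrow> 'a \<Rightarrow> 'a \<Rightarrow> 'a"
  assumes meet: "\<lbrakk>a \<in> P; x \<in> P; y \<in> P; a \<preceq> x; a \<preceq> y\<rbrakk> \<Longrightarrow>
      meet a x y \<in> P \<and> a \<preceq> meet a x y \<and> meet a x y \<preceq> x \<and> meet a x y \<preceq> y \<and>
      (\<forall>z\<in>P. a \<preceq> z \<and> z \<preceq> x \<and> z \<preceq> y \<longrightarrow> z \<preceq> meet a x y)"
begin

fun ngcd :: "('a \<times> 'a) list \<Rightarrow> ('a \<times> 'a) list \<Rightarrow> ('a \<times> 'a) list" where
  "ngcd ((x, y) # v) ((x', y') # w) =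
     (if x \<noteq> x' then []
      else if y = y' then (x, y) # ngcd v w
      else if meet x y y' = x then [] else [(x, meet x y y')])"
| "ngcd _ _ = []"

lemma ldvd_ngcd_left: "normal v \<Longrightarrow> normal w \<Longrightarrow> ldvd (ngcd v w) v"
proof (induction v w rule: ngcd.induct)
  case (1 x y v x' y' w)
  then show ?case using meet[of x y y'] normal_hd[OF "1.prems"(1)] normal_hd[OF "1.prems"(2)]
    by (auto dest: normal_Cons)
qed auto

lemma ldvd_ngcd_right: "normal v \<Longrightarrow> normal w \<Longrightarrow> ldvd (ngcd v w) w"
proof (induction v w rule: ngcd.induct)
  case (1 x y v x' y' w)
  then show ?case using meet[of x y y'] normal_hd[OF "1.prems"(1)] normal_hd[OF "1.prems"(2)]
    by (auto dest: normal_Cons)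
qed auto

lemma ldvd_ngcd_greatest: "normal v \<Longrightarrow> normal w \<Longrightarrow> ldvd d v \<Longrightarrow> ldvd d w \<Longrightarrow> ldvd d (ngcd v w)"
proof (induction v w arbitrary: d rule: ngcd.induct)
  case (1 x y v x' y' w)
  have xy: "x \<in> P" "y \<in> P" "x \<preceq> y" and y': "y' \<in> P" "x' \<preceq> y'"
    using normal_hd[OF "1.prems"(1)] normal_hd[OF "1.prems"(2)] by auto
  consider "x \<noteq> x'" | "x = x'" "y = y'" | "x = x'" "y \<noteq> y'" by blast
  then show ?case
  proof cases
    case 1
    then show ?thesis using ldvd_hd "1.prems"(3,4) by fastforce
  next
    case 2
    then show ?thesis using "1.IH" "1.prems" by (cases d) (auto dest: normal_Cons)
  next
    case 3
    then consider "d = []" | r where "r \<in> P" "d = [(x, r)]" "x \<preceq> r" "r \<preceq> y" "r \<preceq> y'" "r \<noteq> x"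
      using ldvd_common_of_diverging "1.prems"(3,4) by blast
    then show ?thesis
    proof cases
      case (2 r)
      then have "r \<preceq> meet x y y'" using meet[of x y y'] 3 xy y' by blast
      then show ?thesis using 2 3 prec_antisym meet[of x y y'] xy y' by auto
    qed simp
  qed
qed auto

end

theorem left_gcd_monoid_if_meet_semilattices:
  assumes "\<forall>a\<in>P. meet_semilattice_wrt le {x\<in>P. a \<preceq> x}"
  shows "pm_left_gcd_monoid G R"
proof -
  define meet where "meet a x y =
    (SOME m. m \<in> P \<and> a \<preceq> m \<and> m \<preceq> x \<and> m \<preceq> y \<and> (\<forall>z\<in>P. a \<preceq> z \<and> z \<preceq> x \<and> z \<preceq> y \<longrightarrow> z \<preceq> m))"
    for a x y
  have meet_spec: "meet a x y \<in> P \<and> a \<preceq> meet a x y \<and> meet a x y \<preceq> x \<and> meet a x y \<preceq> y \<and>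
      (\<forall>z\<in>P. a \<preceq> z \<and> z \<preceq> x \<and> z \<preceq> y \<longrightarrow> z \<preceq> meet a x y)"
    if "a \<in> P" "x \<in> P" "y \<in> P" "a \<preceq> x" "a \<preceq> y" for a x y
  proof -
    have "\<exists>m. m \<in> P \<and> a \<preceq> m \<and> m \<preceq> x \<and> m \<preceq> y \<and> (\<forall>z\<in>P. a \<preceq> z \<and> z \<preceq> x \<and> z \<preceq> y \<longrightarrow> z \<preceq> m)"
      using assms that unfolding meet_semilattice_wrt_def by blast
    then show ?thesis unfolding meet_def by (rule someI_ex)
  qed
  have "\<exists>d\<in>words G. pm_le G R d v \<and> pm_le G R d w \<and>
      (\<forall>c\<in>words G. pm_le G R c v \<and> pm_le G R c w \<longrightarrow> pm_le G R c d)"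
    if v: "v \<in> words G" and w: "w \<in> words G" for v w
  proof -
    let ?d = "ngcd meet (nf v) (nf w)"
    note nv = normal_nf[OF v] and nw = normal_nf[OF w]
    have "normal ?d"
      using normal_ldvd[OF ldvd_ngcd_left[OF meet_spec nv nw] nv] .
    then have d: "?d \<in> words G" "nf ?d = ?d" by (simp_all add: normal_words nf_normal)
    show ?thesis
      using ldvd_ngcd_left[OF meet_spec nv nw] ldvd_ngcd_right[OF meet_spec nv nw]
        ldvd_ngcd_greatest[OF meet_spec nv nw] pm_le_iff_ldvd v w d
      by (intro bexI[of _ ?d]) auto
  qed
  then show ?thesis
    using conical left_cancellative unfolding pm_left_gcd_monoid_def by blast
qed

lemma pm_le_single_iff:
  assumes "(a, z) \<in> G" "(a, x) \<in> G"
  shows "pm_le G R [(a, z)] [(a, x)] \<longleftrightarrow> z \<preceq> x"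
proof -
  have "[(a, z)] \<in> words G" "[(a, x)] \<in> words G" using assms by (simp_all add: words_def)
  then show ?thesis
    using assms prec_antisym by (auto simp: pm_le_iff_ldvd prec_refl)
qed

lemma left_divisor_single:
  assumes "d \<in> words G" "(a, x) \<in> G" "pm_le G R d [(a, x)]"
  obtains r where "(a, r) \<in> G" "nf d = nf [(a, r)]"
proof -
  have "ldvd (nf d) (if a = x then [] else [(a, x)])"
    using assms pm_le_iff_ldvd[of d "[(a, x)]"] by (simp add: words_def)
  then consider "nf d = []" | r where "r \<in> P" "a \<preceq> r" "r \<noteq> a" "nf d = [(a, r)]"
    using assms(2) by (auto split: if_splits)
  then show ?thesis
  proof cases
    case 1
    then show ?thesis using that[of a] assms(2) by (simp add: prec_refl)
  next
    case (2 r)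
    then show ?thesis using that[of r] assms(2) by simp
  qed
qed

theorem meet_semilattices_if_left_gcd_monoid:
  assumes "pm_left_gcd_monoid G R" "a \<in> P"
  shows "meet_semilattice_wrt le {x\<in>P. a \<preceq> x}"
  unfolding meet_semilattice_wrt_def
proof (intro ballI)
  fix x y assume x: "x \<in> {x\<in>P. a \<preceq> x}" and y: "y \<in> {x\<in>P. a \<preceq> x}"
  have ax: "(a, x) \<in> G" and ay: "(a, y) \<in> G" using x y \<open>a \<in> P\<close> by auto
  then have w: "[(a, x)] \<in> words G" "[(a, y)] \<in> words G" by (simp_all add: words_def)
  then obtain d where d: "d \<in> words G" "pm_le G R d [(a, x)]" "pm_le G R d [(a, y)]"
    and d_greatest: "\<forall>c\<in>words G. pm_le G R c [(a, x)] \<and> pm_le G R c [(a, y)] \<longrightarrow> pm_le G R c d"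
    using assms(1) unfolding pm_left_gcd_monoid_def by blast
  obtain r where ar: "(a, r) \<in> G" and r: "nf d = nf [(a, r)]"
    using left_divisor_single[OF d(1) ax d(2)] .
  have wr: "[(a, r)] \<in> words G" using ar by (simp add: words_def)
  have r_divides: "pm_le G R [(a, r)] u \<longleftrightarrow> pm_le G R d u" if "u \<in> words G" for u
    using pm_le_iff_ldvd[OF wr that] pm_le_iff_ldvd[OF d(1) that] r by simp
  have divides_r: "pm_le G R c [(a, r)] \<longleftrightarrow> pm_le G R c d" if "c \<in> words G" for c
    using pm_le_iff_ldvd[OF that wr] pm_le_iff_ldvd[OF that d(1)] r by simp
  have "r \<preceq> x" "r \<preceq> y"
    using d(2,3) r_divides w pm_le_single_iff[OF ar ax] pm_le_single_iff[OF ar ay] by auto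
  moreover have "z \<preceq> r" if z: "z \<in> {x\<in>P. a \<preceq> x}" "z \<preceq> x" "z \<preceq> y" for z
  proof -
    have az: "(a, z) \<in> G" and wz: "[(a, z)] \<in> words G" using z \<open>a \<in> P\<close> by (auto simp: words_def)
    then have "pm_le G R [(a, z)] d"
      using d_greatest pm_le_single_iff[OF az] ax ay z by blast
    then show ?thesis
      using pm_le_single_iff[OF az ar] divides_r[OF wz] by simp
  qed
  ultimately show "\<exists>m\<in>{x\<in>P. a \<preceq> x}. m \<preceq> x \<and> m \<preceq> y \<and> (\<forall>z\<in>{x\<in>P. a \<preceq> x}. z \<preceq> x \<and> z \<preceq> y \<longrightarrow> z \<preceq> m)"
    using ar by auto
qed

theorem left_gcd_monoid_iff_meet_semilattices:
  "pm_left_gcd_monoid G R \<longleftrightarrow> (\<forall>a\<in>P. meet_semilattice_wrt le {x\<in>P. a \<preceq> x})"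
  using left_gcd_monoid_if_meet_semilattices meet_semilattices_if_left_gcd_monoid by blast

end

section \<open>Right divisibility via anti-isomorphisms\<close>

lemma pm_conical_iff_right_conical:
  "pm_conical G R \<longleftrightarrow> (\<forall>x\<in>words G. \<forall>y\<in>words G. pcong R (y @ x) [] \<longrightarrow> pcong R x [])"
proof -
  have "pcong R x []" if "pcong R (y @ x) []" "pcong R y []" for x y
    using pcong_append_context[OF that(2), of "[]" x] that(1)
    by (auto intro: pcong.pc_trans pcong.pc_sym)
  moreover have "pcong R x []" if "pcong R (x @ y) []" "pcong R y []" for x y
    using pcong_append_context[OF that(2), of x "[]"] that(1)
    by (auto intro: pcong.pc_trans pcong.pc_sym)
  ultimately show ?thesis
    unfolding pm_conical_def by blast
qed

locale anti_isomorphic_presentations =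
  fixes G :: "'g set" and R :: "('g list \<times> 'g list) set"
    and G' :: "'g set" and R' :: "('g list \<times> 'g list) set"
    and f :: "'g list \<Rightarrow> 'g list"
  assumes f_f [simp]: "f (f u) = u"
    and f_append: "f (u @ v) = f v @ f u"
    and f_words [simp]: "f u \<in> words G' \<longleftrightarrow> u \<in> words G"
    and f_pcong: "pcong R' (f u) (f v) \<longleftrightarrow> pcong R u v"
begin

lemma f_Nil: "f [] = []"
  using f_append[of "[]" "[]"] by (metis append_self_conv2)

lemma ball_words: "(\<forall>u\<in>words G. Q u) \<longleftrightarrow> (\<forall>u\<in>words G'. Q (f u))"
  by (metis f_f f_words)

lemma bex_words: "(\<exists>u\<in>words G. Q u) \<longleftrightarrow> (\<exists>u\<in>words G'. Q (f u))"
  by (metis f_f f_words)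

lemma pm_rle_iff_pm_le: "pm_rle G R a b \<longleftrightarrow> pm_le G' R' (f a) (f b)"
  unfolding pm_rle_def pm_le_def bex_words f_pcong[symmetric] by (simp add: f_append)

lemma pm_conical_iff: "pm_conical G R \<longleftrightarrow> pm_conical G' R'"
  unfolding pm_conical_def[of G] pm_conical_iff_right_conical[of G'] ball_words f_pcong[symmetric]
  by (simp add: f_append f_Nil)

lemma pm_right_cancellative_iff: "pm_right_cancellative G R \<longleftrightarrow> pm_left_cancellative G' R'"
  unfolding pm_right_cancellative_def pm_left_cancellative_def ball_words f_pcong[symmetric]
  by (simp add: f_append)

lemma pm_right_gcd_monoid_iff: "pm_right_gcd_monoid G R \<longleftrightarrow> pm_left_gcd_monoid G' R'"
  unfolding pm_right_gcd_monoid_def pm_left_gcd_monoid_def pm_conical_iff pm_right_cancellative_iff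
    ball_words bex_words pm_rle_iff_pm_le
  by simp

end

definition mirror :: "('a \<times> 'a) list \<Rightarrow> ('a \<times> 'a) list" where
  "mirror u = rev (map prod.swap u)"

lemma mirror_mirror [simp]: "mirror (mirror u) = u"
  by (simp add: mirror_def rev_map)

lemma mirror_append [simp]: "mirror (u @ v) = mirror v @ mirror u"
  by (simp add: mirror_def)

lemma pcong_mirror:
  "pcong (interval_rels le P) u v \<Longrightarrow>
   pcong (interval_rels (\<lambda>x y. le y x) P) (mirror u) (mirror v)"
proof (induction rule: pcong.induct)
  case (pc_rel u v a b)
  then have "(mirror u, mirror v) \<in> interval_rels (\<lambda>x y. le y x) P"
    by (auto simp: interval_rels_def mirror_def)
  from pcong.pc_rel[OF this, of "mirror b" "mirror a"] show ?case by simp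
qed (auto intro: pcong.intros)

lemma mirror_anti_isomorphism:
  "anti_isomorphic_presentations (interval_gens le P) (interval_rels le P)
     (interval_gens (\<lambda>x y. le y x) P) (interval_rels (\<lambda>x y. le y x) P) mirror"
proof
  show "mirror u \<in> words (interval_gens (\<lambda>x y. le y x) P) \<longleftrightarrow> u \<in> words (interval_gens le P)" for u
    by (auto simp: words_def interval_gens_def mirror_def)
  show "pcong (interval_rels (\<lambda>x y. le y x) P) (mirror u) (mirror v) \<longleftrightarrow> pcong (interval_rels le P) u v"
    for u v
    using pcong_mirror[of le P u v] pcong_mirror[of "\<lambda>x y. le y x" P "mirror u" "mirror v"] by auto
qed simp_all

theorem proposition7p8:
  fixes P :: "'a::order set"
  shows "(pm_left_gcd_monoid (iv_gens P) (iv_rels P) \<longleftrightarrow>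
            (\<forall>a\<in>P. meet_semilattice_on {x\<in>P. a \<le> x}))
       \<and> (pm_right_gcd_monoid (iv_gens P) (iv_rels P) \<longleftrightarrow>
            (\<forall>a\<in>P. join_semilattice_on {x\<in>P. x \<le> a}))"
proof -
  interpret up: interval_monoid "(\<le>) :: 'a \<Rightarrow> 'a \<Rightarrow> bool" P
    by unfold_locales auto
  interpret down: interval_monoid "(\<ge>) :: 'a \<Rightarrow> 'a \<Rightarrow> bool" P
    by unfold_locales auto
  interpret anti_isomorphic_presentations "iv_gens P" "iv_rels P"
      "interval_gens (\<ge>) P" "interval_rels (\<ge>) P" mirror
    using mirror_anti_isomorphism[of "(\<le>)" P]
    by (simp add: iv_gens_def iv_rels_def interval_gens_def interval_rels_def)
  have "meet_semilattice_on S = meet_semilattice_wrt (\<le>) S"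
    and "join_semilattice_on S = meet_semilattice_wrt (\<ge>) S" for S :: "'a set"
    by (auto simp: meet_semilattice_on_def join_semilattice_on_def meet_semilattice_wrt_def)
  moreover have "iv_gens P = interval_gens (\<le>) P" "iv_rels P = interval_rels (\<le>) P"
    by (simp_all add: iv_gens_def iv_rels_def interval_gens_def interval_rels_def)
  ultimately show ?thesis
    using up.left_gcd_monoid_iff_meet_semilattices down.left_gcd_monoid_iff_meet_semilattices
      pm_right_gcd_monoid_iff by simp
qed

end
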